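(* Let $k\in\mathbb{N}$ and $\widetilde{M}_k=\{(x,y,z)\in\mathbb{C}^3 : x^2+y^2+z^{k+1}=0\}$, with coordinate ring $\mathbb{C}[\widetilde{M}_k]$ and holomorphic symplectic form $\widetilde{\omega}=\frac{dx\wedge dy}{(k+1)z^k}=\frac{dy\wedge dz}{2x}=\frac{dz\wedge dx}{2y}$ on $\widetilde{M}_k\setminus\{0\}$. Define the tangent vector fields \begin{align*} \widetilde{V}^x&=(k+1)z^k\partial_y-2y\partial_z,\quad \widetilde{V}^y=-(k+1)z^k\partial_x+2x\partial_z,\quad \widetilde{V}^z=2y\partial_x-2x\partial_y,\\ \widetilde{\Lambda}&=(k+1)x\partial_x+(k+1)y\partial_y+2z\partial_z. \end{align*} Then the space of polynomial vector fields on $\widetilde{M}_k$ equals \[ \big(\mathbb{C}[\widetilde{M}_k]\widetilde{V}^x+\mathbb{C}[\widetilde{M}_k]\widetilde{V}^y+\mathbb{C}[\widetilde{M}_k]\widetilde{V}^z\big)\oplus\mathrm{span}_{\mathbb{C}}\{1,z,\dots,z^{k-1}\}\cdot\widetilde{\Lambda}, \] the vector fields $\widetilde{V}^x,\widetilde{V}^y,\widetilde{V}^z$ are Hamiltonian with respect to $\widetilde{\omega}$ on $\widetilde{M}_k\setminus\{0\}$, and $\widetilde{\Lambda}$ is not a holomorphic symplectic vector field.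
   Context: Polynomial vector fields on an affine variety are the (restrictions to it of) polynomial vector fields on $\mathbb{C}^3$ tangent to it, i.e. derivations of the coordinate ring. A vector field $V$ is Hamiltonian if $i_V\widetilde{\omega}$ is exact on the regular part, and symplectic if $i_V\widetilde{\omega}$ is closed there. *)

theory Defs
  imports "HOL-Analysis.Analysis"
begin

type_synonym pt3 = "complex \<times> complex \<times> complex"
type_synonym vf3 = "pt3 \<Rightarrow> pt3"

definition poly3 :: "(pt3 \<Rightarrow> complex) \<Rightarrow> bool" where
  "poly3 f \<longleftrightarrow> (\<exists>(c::nat \<Rightarrow> nat \<Rightarrow> nat \<Rightarrow> complex) N.
     f = (\<lambda>(x,y,z). \<Sum>a\<le>N. \<Sum>b\<le>N. \<Sum>d\<le>N. c a b d * x^a * y^b * z^d))"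

definition poly_vf :: "vf3 \<Rightarrow> bool" where
  "poly_vf V \<longleftrightarrow> poly3 (\<lambda>p. fst (V p)) \<and> poly3 (\<lambda>p. fst (snd (V p))) \<and> poly3 (\<lambda>p. snd (snd (V p)))"

definition Mk :: "nat \<Rightarrow> pt3 set" where
  "Mk k = {(x,y,z). x^2 + y^2 + z^(k+1) = 0}"

text \<open>A vector field on C^3 is tangent to M_k iff V(f) vanishes on M_k, f = x^2+y^2+z^(k+1).\<close>
definition tangent_Mk :: "nat \<Rightarrow> vf3 \<Rightarrow> bool" where
  "tangent_Mk k V \<longleftrightarrow> (\<forall>p\<in>Mk k. case p of (x,y,z) \<Rightarrow> case V p of (a1,a2,a3) \<Rightarrow>
      a1 * (2*x) + a2 * (2*y) + a3 * (of_nat (k+1) * z^k) = 0)"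

definition vscale :: "complex \<Rightarrow> pt3 \<Rightarrow> pt3" where
  "vscale c v = (case v of (a1,a2,a3) \<Rightarrow> (c*a1, c*a2, c*a3))"

definition Vx :: "nat \<Rightarrow> vf3" where
  "Vx k = (\<lambda>(x,y,z). (0, of_nat (k+1) * z^k, -2*y))"
definition Vy :: "nat \<Rightarrow> vf3" where
  "Vy k = (\<lambda>(x,y,z). (- of_nat (k+1) * z^k, 0, 2*x))"
definition Vz :: "vf3" where
  "Vz = (\<lambda>(x,y,z). (2*y, -2*x, 0))"
definition Lam :: "nat \<Rightarrow> vf3" where
  "Lam k = (\<lambda>(x,y,z). (of_nat (k+1) * x, of_nat (k+1) * y, 2*z))"

text \<open>The holomorphic symplectic form on M_k minus 0, evaluated on tangent vectors,
  using whichever of the three (equal) expressions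
  dx^dy/((k+1)z^k) = dy^dz/(2x) = dz^dx/(2y) has nonzero denominator.\<close>
definition omega :: "nat \<Rightarrow> pt3 \<Rightarrow> pt3 \<Rightarrow> pt3 \<Rightarrow> complex" where
  "omega k p V W = (case p of (x,y,z) \<Rightarrow> case V of (a1,a2,a3) \<Rightarrow> case W of (b1,b2,b3) \<Rightarrow>
     if of_nat (k+1) * z^k \<noteq> 0 then (a1*b2 - a2*b1) / (of_nat (k+1) * z^k)
     else if x \<noteq> 0 then (a2*b3 - a3*b2) / (2*x)
     else (a3*b1 - a1*b3) / (2*y))"

text \<open>A 1-form alpha (p, tangent vector) on S is exact if alpha = dH for a function H,
  i.e. along every differentiable curve in S the derivative of H is alpha of the velocity.\<close>
definition exact_on :: "pt3 set \<Rightarrow> (pt3 \<Rightarrow> pt3 \<Rightarrow> complex) \<Rightarrow> bool" where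
  "exact_on S \<alpha> \<longleftrightarrow> (\<exists>H :: pt3 \<Rightarrow> complex. \<forall>(\<gamma>::real \<Rightarrow> pt3) \<gamma>' t.
      (\<forall>s. \<gamma> s \<in> S) \<longrightarrow> (\<gamma> has_vector_derivative \<gamma>') (at t) \<longrightarrow>
      ((\<lambda>s. H (\<gamma> s)) has_vector_derivative \<alpha> (\<gamma> t) \<gamma>') (at t))"

definition closed_on :: "pt3 set \<Rightarrow> (pt3 \<Rightarrow> pt3 \<Rightarrow> complex) \<Rightarrow> bool" where
  "closed_on S \<alpha> \<longleftrightarrow> (\<forall>p\<in>S. \<exists>e>0. exact_on (S \<inter> ball p e) \<alpha>)"

definition hamiltonian :: "nat \<Rightarrow> vf3 \<Rightarrow> bool" where
  "hamiltonian k V \<longleftrightarrow> exact_on (Mk k - {0}) (\<lambda>p w. omega k p (V p) w)"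

definition symplectic_vf :: "nat \<Rightarrow> vf3 \<Rightarrow> bool" where
  "symplectic_vf k V \<longleftrightarrow> closed_on (Mk k - {0}) (\<lambda>p w. omega k p (V p) w)"

end

theory Submission
  imports Defs
begin

text \<open>
  Modulo \<open>x\<^sup>2 + y\<^sup>2 + z\<^sup>k\<^sup>+\<^sup>1\<close> every polynomial can be written as \<open>a + x b\<close> with \<open>a\<close>, \<open>b\<close> free
  of \<open>x\<close>. Writing the components of a tangent field in this form, tangency splits into two
  polynomial identities in \<open>y, z\<close> that hold on all of \<open>\<complex>\<^sup>3\<close> (evaluate at both square roots
  \<open>x = \<plusminus>w\<close> and use density). Since \<open>y\<close> and \<open>z\<^sup>k\<close> are coprime, their solutions are exactly the
  combinations of \<open>Vx, Vy, Vz\<close> and \<open>g \<Lambda>\<close>; moreover \<open>y \<Lambda>\<close> and \<open>z\<^sup>k \<Lambda>\<close> are such combinations on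
  \<open>M\<^sub>k\<close>, so only the part of \<open>g(0,0,z)\<close> of degree below \<open>k\<close> survives. These coefficients are
  unique: on the slice \<open>x = 0\<close> the second component shows that \<open>\<Sum> l\<^sub>i z\<^sup>i\<close> is \<open>z\<^sup>k\<close> times the
  odd part in \<open>y\<close> of a polynomial, which is continuous in \<open>z\<close>.

  \<open>Vx, Vy, Vz\<close> are the Hamiltonian fields of \<open>-x, -y, -z\<close>. For \<open>\<Lambda>\<close>, the map
  \<open>(u, \<phi>) \<mapsto> (i u\<^sup>k\<^sup>+\<^sup>1 cos \<phi>, i u\<^sup>k\<^sup>+\<^sup>1 sin \<phi>, u\<^sup>2)\<close> parametrizes \<open>M\<^sub>k\<close> near \<open>(i, 0, 1)\<close>, and in
  these coordinates \<open>i\<^sub>\<Lambda> \<omega> = -u\<^sup>2 d\<phi>\<close>. Its integral over a small circle of radius \<open>r\<close> around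
  \<open>(u, \<phi>) = (1, 0)\<close> is \<open>-2\<pi>r\<^sup>2 \<noteq> 0\<close>, so \<open>i\<^sub>\<Lambda> \<omega>\<close> is not even locally exact.
\<close>

lemma one_plus_of_nat_neq_0 [simp]: "1 + (of_nat k :: 'a::semiring_char_0) \<noteq> 0"
  using of_nat_neq_0[of k, where 'a='a] by simp

lemma power_by_parity: "(t::'a::monoid_mult) ^ n = (if even n then 1 else t) * (t^2) ^ (n div 2)"
proof -
  have "t ^ n = t ^ (n mod 2) * (t^2) ^ (n div 2)"
    by (metis power_add power_mult mod_mult_div_eq)
  then show ?thesis
    by (simp add: odd_iff_mod_2_eq_one[symmetric] even_iff_mod_2_eq_zero)
qed

lemma isCont_eq_if_eventually_eq:
  fixes h :: "'a::{perfect_space,t2_space} \<Rightarrow> 'b::t2_space"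
  assumes "isCont h a" "eventually (\<lambda>t. h t = c) (at a)"
  shows "h a = c"
  using at_within_isCont_imp_nhds[OF assms(2,1) continuous_const] by (rule eventually_nhds_x_imp_x)

lemma isCont_eq_if_eq_off_point:
  fixes h :: "'a::{perfect_space,t2_space} \<Rightarrow> 'b::t2_space"
  assumes "isCont h a" "\<And>t. t \<noteq> a \<Longrightarrow> h t = c"
  shows "h a = c"
  using assms by (intro isCont_eq_if_eventually_eq) (auto simp: eventually_at_filter)

section \<open>Polynomial functions on \<open>\<complex>\<^sup>3\<close>\<close>

text \<open>Unlike \<^const>\<open>poly3\<close>, the exponents range over an arbitrary finite set, which makes closure
  under sums and products immediate.\<close>
definition monomial3 :: "nat \<times> nat \<times> nat \<Rightarrow> pt3 \<Rightarrow> complex" where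
  "monomial3 m p = fst p ^ fst m * fst (snd p) ^ fst (snd m) * snd (snd p) ^ snd (snd m)"

definition poly_fun :: "(pt3 \<Rightarrow> complex) \<Rightarrow> bool" where
  "poly_fun f \<longleftrightarrow> (\<exists>S c. finite S \<and> (\<forall>p. f p = (\<Sum>m\<in>S. c m * monomial3 m p)))"

lemma poly_fun_const: "poly_fun (\<lambda>p. c)"
  unfolding poly_fun_def
  by (rule exI[of _ "{(0,0,0)}"], rule exI[of _ "\<lambda>_. c"]) (simp add: monomial3_def)

lemma poly_fun_x: "poly_fun (\<lambda>p. fst p)"
  unfolding poly_fun_def
  by (rule exI[of _ "{(1,0,0)}"], rule exI[of _ "\<lambda>_. 1"]) (simp add: monomial3_def)

lemma poly_fun_y: "poly_fun (\<lambda>p. fst (snd p))"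
  unfolding poly_fun_def
  by (rule exI[of _ "{(0,1,0)}"], rule exI[of _ "\<lambda>_. 1"]) (simp add: monomial3_def)

lemma poly_fun_z: "poly_fun (\<lambda>p. snd (snd p))"
  unfolding poly_fun_def
  by (rule exI[of _ "{(0,0,1)}"], rule exI[of _ "\<lambda>_. 1"]) (simp add: monomial3_def)

lemma poly_fun_add:
  assumes "poly_fun f" "poly_fun g"
  shows "poly_fun (\<lambda>p. f p + g p)"
proof -
  obtain S1 c1 where S1: "finite S1" and f: "\<And>p. f p = (\<Sum>m\<in>S1. c1 m * monomial3 m p)"
    using assms(1) unfolding poly_fun_def by blast
  obtain S2 c2 where S2: "finite S2" and g: "\<And>p. g p = (\<Sum>m\<in>S2. c2 m * monomial3 m p)"
    using assms(2) unfolding poly_fun_def by blast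
  define c where "c m = (if m \<in> S1 then c1 m else 0) + (if m \<in> S2 then c2 m else 0)" for m
  have "(\<Sum>m\<in>S1\<union>S2. (if m \<in> S1 then c1 m else 0) * monomial3 m p) = f p"
       "(\<Sum>m\<in>S1\<union>S2. (if m \<in> S2 then c2 m else 0) * monomial3 m p) = g p" for p
    unfolding f g by (rule sum.mono_neutral_cong_right; use S1 S2 in auto)+
  then have "f p + g p = (\<Sum>m\<in>S1\<union>S2. c m * monomial3 m p)" for p
    by (simp add: c_def distrib_right sum.distrib)
  then show ?thesis
    unfolding poly_fun_def using S1 S2 by (intro exI[of _ "S1\<union>S2"] exI[of _ c]) auto
qed

lemma poly_fun_mult:
  assumes "poly_fun f" "poly_fun g"
  shows "poly_fun (\<lambda>p. f p * g p)"
proof -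
  obtain S1 c1 where S1: "finite S1" and f: "\<And>p. f p = (\<Sum>m\<in>S1. c1 m * monomial3 m p)"
    using assms(1) unfolding poly_fun_def by blast
  obtain S2 c2 where S2: "finite S2" and g: "\<And>p. g p = (\<Sum>m\<in>S2. c2 m * monomial3 m p)"
    using assms(2) unfolding poly_fun_def by blast
  define h :: "(nat \<times> nat \<times> nat) \<times> (nat \<times> nat \<times> nat) \<Rightarrow> nat \<times> nat \<times> nat" where
    "h q = (case q of ((a,b,d), (a',b',d')) \<Rightarrow> (a + a', b + b', d + d'))" for q
  have h_monomial: "monomial3 (h (m, n)) p = monomial3 m p * monomial3 n p" for m n p
    by (cases m; cases n) (simp add: h_def monomial3_def power_add)
  define c where "c m = (\<Sum>q\<in>{q\<in>S1\<times>S2. h q = m}. c1 (fst q) * c2 (snd q))" for m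
  have "f p * g p = (\<Sum>m\<in>h ` (S1\<times>S2). c m * monomial3 m p)" for p
  proof -
    have "f p * g p = (\<Sum>q\<in>S1\<times>S2. c1 (fst q) * c2 (snd q) * monomial3 (h q) p)"
      unfolding f g sum_product sum.cartesian_product
      by (intro sum.cong refl) (auto simp: h_monomial)
    also have "\<dots> = (\<Sum>m\<in>h ` (S1\<times>S2).
        \<Sum>q\<in>{q\<in>S1\<times>S2. h q = m}. c1 (fst q) * c2 (snd q) * monomial3 (h q) p)"
      by (rule sum.image_gen) (use S1 S2 in auto)
    also have "\<dots> = (\<Sum>m\<in>h ` (S1\<times>S2). c m * monomial3 m p)"
      unfolding c_def sum_distrib_right by (rule sum.cong) auto
    finally show ?thesis .
  qed
  then show ?thesis
    unfolding poly_fun_def using S1 S2 by (intro exI[of _ "h ` (S1\<times>S2)"] exI[of _ c]) auto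
qed

lemma poly_fun_uminus: "poly_fun f \<Longrightarrow> poly_fun (\<lambda>p. - f p)"
  using poly_fun_mult[OF poly_fun_const[of "-1"], of f] by simp

lemma poly_fun_diff: "poly_fun f \<Longrightarrow> poly_fun g \<Longrightarrow> poly_fun (\<lambda>p. f p - g p)"
  using poly_fun_add[of f "\<lambda>p. - g p"] poly_fun_uminus[of g] by simp

lemma poly_fun_divide_const: "poly_fun f \<Longrightarrow> poly_fun (\<lambda>p. f p / c)"
  using poly_fun_mult[OF _ poly_fun_const[of "1/c"], of f] by simp

lemma poly_fun_power: "poly_fun f \<Longrightarrow> poly_fun (\<lambda>p. f p ^ n)"
  by (induction n) (auto intro: poly_fun_const poly_fun_mult)

lemma poly_fun_sum:
  "finite A \<Longrightarrow> (\<And>i. i \<in> A \<Longrightarrow> poly_fun (f i)) \<Longrightarrow> poly_fun (\<lambda>p. \<Sum>i\<in>A. f i p)"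
  by (induction A rule: finite_induct) (auto intro: poly_fun_const poly_fun_add)

lemmas poly_fun_intros = poly_fun_const poly_fun_x poly_fun_y poly_fun_z poly_fun_add
  poly_fun_mult poly_fun_uminus poly_fun_diff poly_fun_divide_const poly_fun_power poly_fun_sum

lemma poly_fun_subst:
  assumes "poly_fun f" "poly_fun g1" "poly_fun g2" "poly_fun g3"
  shows "poly_fun (\<lambda>p. f (g1 p, g2 p, g3 p))"
proof -
  obtain S c where "finite S" and f: "\<And>p. f p = (\<Sum>m\<in>S. c m * monomial3 m p)"
    using assms(1) unfolding poly_fun_def by blast
  then show ?thesis
    unfolding f monomial3_def by (simp; intro poly_fun_intros assms)
qed

lemma poly3_iff_poly_fun: "poly3 f \<longleftrightarrow> poly_fun f"
proof
  assume "poly3 f"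
  then obtain c N where f: "f = (\<lambda>(x,y,z). \<Sum>a\<le>N. \<Sum>b\<le>N. \<Sum>d\<le>N. c a b d * x^a * y^b * z^d)"
    unfolding poly3_def by blast
  show "poly_fun f"
    unfolding f case_prod_unfold by (intro poly_fun_intros finite_atMost)
next
  assume "poly_fun f"
  then obtain S c where S: "finite S" and f: "\<And>p. f p = (\<Sum>m\<in>S. c m * monomial3 m p)"
    unfolding poly_fun_def by blast
  define N where "N = Max (insert 0 ((\<lambda>m. fst m + fst (snd m) + snd (snd m)) ` S))"
  have bound: "fst m \<le> N \<and> fst (snd m) \<le> N \<and> snd (snd m) \<le> N" if "m \<in> S" for m
  proof -
    have "fst m + fst (snd m) + snd (snd m) \<le> N"
      unfolding N_def using S that by (intro Max_ge) auto
    then show ?thesis by auto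
  qed
  define c' where "c' a b d = (if (a,b,d) \<in> S then c (a,b,d) else 0)" for a b d
  have "f p = (\<Sum>a\<le>N. \<Sum>b\<le>N. \<Sum>d\<le>N. c' a b d * fst p^a * fst (snd p)^b * snd (snd p)^d)" for p
  proof -
    have "(\<Sum>a\<le>N. \<Sum>b\<le>N. \<Sum>d\<le>N. c' a b d * fst p^a * fst (snd p)^b * snd (snd p)^d)
        = (\<Sum>m\<in>{..N}\<times>{..N}\<times>{..N}. c' (fst m) (fst (snd m)) (snd (snd m)) * monomial3 m p)"
      by (simp add: sum.cartesian_product' monomial3_def mult_ac)
    also have "\<dots> = (\<Sum>m\<in>S. c m * monomial3 m p)"
      by (rule sum.mono_neutral_cong_right) (use bound in \<open>auto simp: c'_def\<close>)
    finally show ?thesis using f by simp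
  qed
  then show "poly3 f"
    unfolding poly3_def by (intro exI[of _ c'] exI[of _ N]) (auto simp: case_prod_unfold)
qed

lemma poly_fun_isCont:
  assumes "poly_fun f"
  shows "isCont f p"
proof -
  obtain S c where "\<And>p. f p = (\<Sum>m\<in>S. c m * monomial3 m p)"
    using assms unfolding poly_fun_def by blast
  then have "f = (\<lambda>p. \<Sum>m\<in>S. c m * monomial3 m p)"
    by auto
  then show ?thesis
    unfolding monomial3_def by (auto intro!: continuous_intros)
qed

lemma poly_fun_continuous_compose [continuous_intros]:
  "poly_fun f \<Longrightarrow> continuous (at t within S) g \<Longrightarrow> continuous (at t within S) (\<lambda>s. f (g s))"
  by (rule continuous_within_compose3[OF poly_fun_isCont])

section \<open>Normal forms of polynomial functions\<close>

lemma Mk_iff: "(x,y,z) \<in> Mk k \<longleftrightarrow> x^2 = -(y^2 + z^(k+1))"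
  unfolding eq_neg_iff_add_eq_0 by (simp add: Mk_def add.assoc)

lemma poly_fun_reduce_mod_Mk:
  assumes "poly_fun f"
  obtains f0 f1 where "poly_fun f0" "poly_fun f1"
    and "\<And>x y z. f0 (x,y,z) = f0 (0,y,z)" "\<And>x y z. f1 (x,y,z) = f1 (0,y,z)"
    and "\<And>x y z. (x,y,z) \<in> Mk k \<Longrightarrow> f (x,y,z) = f0 (x,y,z) + x * f1 (x,y,z)"
proof -
  obtain S c where S: "finite S" and f: "\<And>p. f p = (\<Sum>m\<in>S. c m * monomial3 m p)"
    using assms unfolding poly_fun_def by blast
  define w :: "pt3 \<Rightarrow> complex" where "w p = -(fst (snd p)^2 + snd (snd p)^(k+1))" for p
  define f0 where "f0 p = (\<Sum>m\<in>S. c m * ((if even (fst m) then 1 else 0) * w p ^ (fst m div 2))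
      * fst (snd p) ^ fst (snd m) * snd (snd p) ^ snd (snd m))" for p
  define f1 where "f1 p = (\<Sum>m\<in>S. c m * ((if even (fst m) then 0 else 1) * w p ^ (fst m div 2))
      * fst (snd p) ^ fst (snd m) * snd (snd p) ^ snd (snd m))" for p
  have "poly_fun f0" "poly_fun f1"
    unfolding f0_def[abs_def] f1_def[abs_def] w_def by (intro poly_fun_intros S)+
  moreover have "f0 (x,y,z) = f0 (0,y,z)" "f1 (x,y,z) = f1 (0,y,z)" for x y z
    by (simp_all add: f0_def f1_def w_def)
  moreover have "f (x,y,z) = f0 (x,y,z) + x * f1 (x,y,z)" if "(x,y,z) \<in> Mk k" for x y z
  proof -
    have "x^2 = w (x,y,z)"
      using that by (simp add: Mk_iff w_def)
    then have "x^a = (if even a then 1 else 0) * w (x,y,z) ^ (a div 2)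
        + x * ((if even a then 0 else 1) * w (x,y,z) ^ (a div 2))" for a
      by (subst power_by_parity) auto
    then show ?thesis
      unfolding f f0_def f1_def monomial3_def
      by (simp add: sum_distrib_left sum.distrib[symmetric] algebra_simps)
  qed
  ultimately show ?thesis
    by (rule that)
qed

lemma poly_fun_divide_y:
  assumes "poly_fun f"
  obtains q where "poly_fun q" "\<And>x y z. f (x,y,z) = f (x,0,z) + y * q (x,y,z)"
proof -
  obtain S c where S: "finite S" and f: "\<And>p. f p = (\<Sum>m\<in>S. c m * monomial3 m p)"
    using assms unfolding poly_fun_def by blast
  define q where "q p = (\<Sum>m\<in>S. c m * fst p ^ fst m
      * ((if fst (snd m) = 0 then 0 else 1) * fst (snd p) ^ (fst (snd m) - 1)) * snd (snd p) ^ snd (snd m))" for p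
  have "poly_fun q"
    unfolding q_def[abs_def] by (intro poly_fun_intros S)
  moreover have "f (x,y,z) = f (x,0,z) + y * q (x,y,z)" for x y z
  proof -
    have "c m * monomial3 m (x,y,z) = c m * monomial3 m (x,0,z) + y * (c m * x ^ fst m
        * ((if fst (snd m) = 0 then 0 else 1) * y ^ (fst (snd m) - 1)) * z ^ snd (snd m))" for m
      by (cases "fst (snd m)") (auto simp: monomial3_def algebra_simps)
    then show ?thesis
      unfolding f q_def by (simp add: sum.distrib sum_distrib_left)
  qed
  ultimately show ?thesis
    by (rule that)
qed

lemma poly_fun_split_low_z:
  assumes "poly_fun f"
  obtains l s where "poly_fun s" "\<And>x y z. s (x,y,z) = s (0,0,z)"
    and "\<And>z. f (0,0,z) = (\<Sum>i<k. l i * z^i) + z^k * s (0,0,z)"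
proof -
  obtain S c where S: "finite S" and f: "\<And>p. f p = (\<Sum>m\<in>S. c m * monomial3 m p)"
    using assms unfolding poly_fun_def by blast
  define w where "w m = c m * 0 ^ fst m * 0 ^ fst (snd m)" for m
  define l where "l i = (\<Sum>m\<in>S. if snd (snd m) = i then w m else 0)" for i
  define s :: "pt3 \<Rightarrow> complex" where
    "s p = (\<Sum>m\<in>S. w m * ((if k \<le> snd (snd m) then 1 else 0) * snd (snd p) ^ (snd (snd m) - k)))" for p
  have "poly_fun s"
    unfolding s_def[abs_def] by (intro poly_fun_intros S)
  moreover have "s (x,y,z) = s (0,0,z)" for x y z
    by (simp add: s_def)
  moreover have "f (0,0,z) = (\<Sum>i<k. l i * z^i) + z^k * s (0,0,z)" for z
  proof -
    have low: "(\<Sum>i<k. (if d = i then v else 0) * z^i) = v * (if d < k then z^d else 0)" for d v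
      by (simp add: if_distrib[of "\<lambda>u. u * _"] sum.delta' cong: if_cong)
    have "f (0,0,z) = (\<Sum>m\<in>S. w m * (if snd (snd m) < k then z^snd (snd m) else 0))
        + (\<Sum>m\<in>S. w m * (if k \<le> snd (snd m) then z^snd (snd m) else 0))"
      unfolding f w_def monomial3_def sum.distrib[symmetric] by (intro sum.cong) auto
    also have "(\<Sum>m\<in>S. w m * (if snd (snd m) < k then z^snd (snd m) else 0)) = (\<Sum>i<k. l i * z^i)"
      unfolding l_def sum_distrib_right by (subst sum.swap) (simp add: low)
    also have "(\<Sum>m\<in>S. w m * (if k \<le> snd (snd m) then z^snd (snd m) else 0)) = z^k * s (0,0,z)"
      unfolding s_def sum_distrib_left by (intro sum.cong) (auto simp: power_add[symmetric])
    finally show ?thesis .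
  qed
  ultimately show ?thesis
    by (rule that)
qed

lemma poly_fun_zero_if_zero_off_curve:
  assumes "poly_fun g" "\<And>x y z. y^2 + z^(k+1) \<noteq> 0 \<Longrightarrow> g (x,y,z) = 0"
  shows "g (x,y,z) = 0"
proof (cases "y^2 + z^(k+1) = 0")
  case True
  have factor: "(y+t)^2 + z^(k+1) = t * (2*y + t)" for t
    using True by (simp add: power2_eq_square algebra_simps add_eq_0_iff)
  have "eventually (\<lambda>t. t \<noteq> 0 \<and> t \<noteq> -2*y) (at (0::complex))"
    by (intro eventually_conj eventually_neq_at_within)
  then have "eventually (\<lambda>t. g (x, y + t, z) = 0) (at 0)"
    using factor by (auto elim!: eventually_mono intro: assms(2) simp: add_eq_0_iff)
  moreover have "isCont (\<lambda>t. g (x, y + t, z)) 0"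
    using assms(1) by (intro continuous_intros)
  ultimately have "g (x, y + 0, z) = 0"
    using isCont_eq_if_eventually_eq by blast
  then show ?thesis
    by simp
qed (use assms(2) in blast)

lemma Mk_x_free_parts_vanish:
  assumes "poly_fun g"
    and f_x_free: "\<And>x y z. f (x,y,z) = f (0,y,z)"
    and g_x_free: "\<And>x y z. g (x,y,z) = g (0,y,z)"
    and vanish: "\<And>x y z. (x,y,z) \<in> Mk k \<Longrightarrow> f (x,y,z) + x * g (x,y,z) = 0"
  shows "f (x,y,z) = 0" "g (x,y,z) = 0"
proof -
  have f_g: "f (0,y,z) = 0 \<and> (y^2 + z^(k+1) \<noteq> 0 \<longrightarrow> g (0,y,z) = 0)" for y z
  proof -
    define w where "w = csqrt (-(y^2 + z^(k+1)))"
    have "(w,y,z) \<in> Mk k" "(-w,y,z) \<in> Mk k"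
      by (simp_all add: Mk_iff w_def)
    then have plus: "f (0,y,z) + w * g (0,y,z) = 0" and minus: "f (0,y,z) - w * g (0,y,z) = 0"
      using vanish f_x_free[of w y z] g_x_free[of w y z] f_x_free[of "-w" y z] g_x_free[of "-w" y z]
      by fastforce+
    have "2 * f (0,y,z) = (f (0,y,z) + w * g (0,y,z)) + (f (0,y,z) - w * g (0,y,z))"
      by simp
    then have "f (0,y,z) = 0"
      unfolding plus minus by simp
    moreover have "y^2 + z^(k+1) \<noteq> 0 \<Longrightarrow> w \<noteq> 0"
      unfolding w_def by (metis csqrt_eq_0 neg_equal_0_iff_equal)
    ultimately show ?thesis
      using plus by auto
  qed
  then show "f (x,y,z) = 0"
    using f_x_free by metis
  show "g (x,y,z) = 0"
  proof (rule poly_fun_zero_if_zero_off_curve[OF assms(1)])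
    show "g (x,y,z) = 0" if "y^2 + z^(k+1) \<noteq> 0" for x y z
      using f_g[of y z] that g_x_free[of x y z] by simp
  qed
qed

lemma poly_fun_syzygy_y_zk:
  assumes "poly_fun u" "poly_fun v" and syz: "\<And>x y z. y * u (x,y,z) + z^k * v (x,y,z) = 0"
  obtains q where "poly_fun q"
    and "\<And>x y z. v (x,y,z) = y * q (x,y,z)" "\<And>x y z. u (x,y,z) = - (z^k * q (x,y,z))"
proof -
  have v_y0: "v (x,0,z) = 0" for x z
  proof -
    have "isCont (\<lambda>t. v (x,0,t)) z"
      using assms(2) by (intro continuous_intros)
    moreover have "v (x,0,t) = 0" if "t \<noteq> 0" for t
      using syz[where y=0 and z=t] that by simp
    ultimately show ?thesis
      by (cases "z = 0") (auto intro: isCont_eq_if_eq_off_point)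
  qed
  obtain q where q: "poly_fun q" "\<And>x y z. v (x,y,z) = v (x,0,z) + y * q (x,y,z)"
    using poly_fun_divide_y[OF assms(2)] by blast
  have v_q: "v (x,y,z) = y * q (x,y,z)" for x y z
    using q(2) v_y0 by simp
  have u_q: "u (x,y,z) = - (z^k * q (x,y,z))" for x y z
  proof -
    have "isCont (\<lambda>t. u (x,t,z) + z^k * q (x,t,z)) y"
      using assms(1) q(1) by (intro continuous_intros)
    moreover have "u (x,t,z) + z^k * q (x,t,z) = 0" if "t \<noteq> 0" for t
    proof -
      have "t * (u (x,t,z) + z^k * q (x,t,z)) = 0"
        using syz[where y=t] unfolding v_q by (simp add: algebra_simps)
      then show ?thesis
        using that by simp
    qed
    ultimately have "u (x,y,z) + z^k * q (x,y,z) = 0"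
      by (cases "y = 0") (auto intro: isCont_eq_if_eq_off_point)
    then show ?thesis
      by (simp add: add_eq_0_iff)
  qed
  show ?thesis
    using q(1) v_q u_q by (rule that)
qed

section \<open>Polynomial vector fields tangent to \<open>M\<^sub>k\<close>\<close>

lemma poly_vf_iff:
  "poly_vf V \<longleftrightarrow>
    poly_fun (\<lambda>p. fst (V p)) \<and> poly_fun (\<lambda>p. fst (snd (V p))) \<and> poly_fun (\<lambda>p. snd (snd (V p)))"
  unfolding poly_vf_def poly3_iff_poly_fun ..

lemma poly_vf_basic_fields: "poly_vf (Vx k)" "poly_vf (Vy k)" "poly_vf Vz" "poly_vf (Lam k)"
  unfolding poly_vf_iff Vx_def Vy_def Vz_def Lam_def case_prod_unfold
  by (simp_all; intro conjI poly_fun_intros)+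

lemma tangent_Mk_basic_fields:
  "tangent_Mk k (Vx k)" "tangent_Mk k (Vy k)" "tangent_Mk k Vz" "tangent_Mk k (Lam k)"
proof -
  show "tangent_Mk k (Vx k)" "tangent_Mk k (Vy k)" "tangent_Mk k Vz"
    unfolding tangent_Mk_def Vx_def Vy_def Vz_def by (auto simp: algebra_simps)
  have "of_nat (k+1) * x * (2*x) + of_nat (k+1) * y * (2*y) + 2 * z * (of_nat (k+1) * z^k)
      = 2 * of_nat (k+1) * (x^2 + y^2 + z^(k+1))" for x y z :: complex
    by (simp add: algebra_simps power2_eq_square)
  then show "tangent_Mk k (Lam k)"
    unfolding tangent_Mk_def Lam_def Mk_def by auto
qed

lemma poly_vf_reduce_mod_Mk:
  assumes "poly_vf V"
  obtains a1 a2 a3 b1 b2 b3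
  where "\<And>f. f \<in> {a1, a2, a3, b1, b2, b3} \<Longrightarrow> poly_fun f \<and> (\<forall>x y z. f (x,y,z) = f (0,y,z))"
    and "\<And>x y z. (x,y,z) \<in> Mk k \<Longrightarrow>
      V (x,y,z) = (a1 (x,y,z) + x * b1 (x,y,z), a2 (x,y,z) + x * b2 (x,y,z), a3 (x,y,z) + x * b3 (x,y,z))"
proof -
  from assms have poly: "poly_fun (\<lambda>p. fst (V p))" "poly_fun (\<lambda>p. fst (snd (V p)))"
      "poly_fun (\<lambda>p. snd (snd (V p)))"
    unfolding poly_vf_iff by blast+
  obtain a1 b1 where r1: "poly_fun a1" "poly_fun b1" "\<And>x y z. a1 (x,y,z) = a1 (0,y,z)"
      "\<And>x y z. b1 (x,y,z) = b1 (0,y,z)"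
      and V1: "\<And>x y z. (x,y,z) \<in> Mk k \<Longrightarrow> fst (V (x,y,z)) = a1 (x,y,z) + x * b1 (x,y,z)"
    using poly_fun_reduce_mod_Mk[where k=k, OF poly(1)] by blast
  obtain a2 b2 where r2: "poly_fun a2" "poly_fun b2" "\<And>x y z. a2 (x,y,z) = a2 (0,y,z)"
      "\<And>x y z. b2 (x,y,z) = b2 (0,y,z)"
      and V2: "\<And>x y z. (x,y,z) \<in> Mk k \<Longrightarrow> fst (snd (V (x,y,z))) = a2 (x,y,z) + x * b2 (x,y,z)"
    using poly_fun_reduce_mod_Mk[where k=k, OF poly(2)] by blast
  obtain a3 b3 where r3: "poly_fun a3" "poly_fun b3" "\<And>x y z. a3 (x,y,z) = a3 (0,y,z)"
      "\<And>x y z. b3 (x,y,z) = b3 (0,y,z)"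
      and V3: "\<And>x y z. (x,y,z) \<in> Mk k \<Longrightarrow> snd (snd (V (x,y,z))) = a3 (x,y,z) + x * b3 (x,y,z)"
    using poly_fun_reduce_mod_Mk[where k=k, OF poly(3)] by blast
  show ?thesis
  proof (rule that)
    show "poly_fun f \<and> (\<forall>x y z. f (x,y,z) = f (0,y,z))" if "f \<in> {a1, a2, a3, b1, b2, b3}" for f
      using that r1 r2 r3 by blast
    show "V (x,y,z) = (a1 (x,y,z) + x * b1 (x,y,z), a2 (x,y,z) + x * b2 (x,y,z),
        a3 (x,y,z) + x * b3 (x,y,z))" if "(x,y,z) \<in> Mk k" for x y z
      using V1[OF that] V2[OF that] V3[OF that] by (simp add: prod_eq_iff)
  qed
qed

lemma Mk_tangency_equations:
  fixes k :: nat and a1 a2 a3 b1 b2 b3 :: "pt3 \<Rightarrow> complex"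
  defines "K \<equiv> of_nat (k+1) :: complex"
  assumes reduced: "\<And>f. f \<in> {a1, a2, a3, b1, b2, b3} \<Longrightarrow> poly_fun f \<and> (\<forall>x y z. f (x,y,z) = f (0,y,z))"
    and V: "\<And>x y z. (x,y,z) \<in> Mk k \<Longrightarrow>
      V (x,y,z) = (a1 (x,y,z) + x * b1 (x,y,z), a2 (x,y,z) + x * b2 (x,y,z), a3 (x,y,z) + x * b3 (x,y,z))"
    and "tangent_Mk k V"
  shows "2 * a1 (x,y,z) + 2 * y * b2 (x,y,z) + K * z^k * b3 (x,y,z) = 0"
    and "y * (2 * (a2 (x,y,z) - y * b1 (x,y,z))) + z^k * (K * a3 (x,y,z) - 2 * z * b1 (x,y,z)) = 0"
proof -
  define T0 where "T0 p = -2 * (fst (snd p)^2 + snd (snd p)^(k+1)) * b1 p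
      + 2 * fst (snd p) * a2 p + K * snd (snd p)^k * a3 p" for p
  define T1 where "T1 p = 2 * a1 p + 2 * fst (snd p) * b2 p + K * snd (snd p)^k * b3 p" for p
  have "poly_fun T1"
    unfolding T1_def[abs_def] using reduced by (intro poly_fun_intros) auto
  moreover have "T0 (x,y,z) = T0 (0,y,z)" "T1 (x,y,z) = T1 (0,y,z)" for x y z
  proof -
    have x_free: "f (x,y,z) = f (0,y,z)" if "f \<in> {a1, a2, a3, b1, b2, b3}" for f
      using reduced[OF that] by blast
    show "T0 (x,y,z) = T0 (0,y,z)" "T1 (x,y,z) = T1 (0,y,z)"
      unfolding T0_def T1_def using x_free[of a1] x_free[of a2] x_free[of a3]
        x_free[of b1] x_free[of b2] x_free[of b3] by simp_all
  qed
  moreover have "T0 (x,y,z) + x * T1 (x,y,z) = 0" if "(x,y,z) \<in> Mk k" for x y z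
  proof -
    have "(a1 (x,y,z) + x * b1 (x,y,z)) * (2*x) + (a2 (x,y,z) + x * b2 (x,y,z)) * (2*y)
        + (a3 (x,y,z) + x * b3 (x,y,z)) * (K * z^k)
        = T0 (x,y,z) + x * T1 (x,y,z) + 2 * b1 (x,y,z) * (x^2 + y^2 + z^(k+1))"
      by (simp add: T0_def T1_def algebra_simps power2_eq_square)
    moreover have "(a1 (x,y,z) + x * b1 (x,y,z)) * (2*x) + (a2 (x,y,z) + x * b2 (x,y,z)) * (2*y)
        + (a3 (x,y,z) + x * b3 (x,y,z)) * (K * z^k) = 0"
      using \<open>tangent_Mk k V\<close> that V[OF that] unfolding tangent_Mk_def K_def by fastforce
    ultimately show ?thesis
      using that by (simp add: Mk_def)
  qed
  ultimately have "T0 (x,y,z) = 0" "T1 (x,y,z) = 0"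
    using Mk_x_free_parts_vanish[of T1 T0 k] by blast+
  then show "2 * a1 (x,y,z) + 2 * y * b2 (x,y,z) + K * z^k * b3 (x,y,z) = 0"
    and "y * (2 * (a2 (x,y,z) - y * b1 (x,y,z))) + z^k * (K * a3 (x,y,z) - 2 * z * b1 (x,y,z)) = 0"
    by (simp_all add: T0_def T1_def algebra_simps power2_eq_square)
qed

lemma tangent_field_reduced_form:
  fixes k :: nat
  defines "K \<equiv> of_nat (k+1) :: complex"
  assumes "poly_vf V" "tangent_Mk k V"
  obtains b1 b2 b3 q where "poly_fun b1" "poly_fun b2" "poly_fun b3" "poly_fun q"
    and "\<And>x y z. b1 (x,y,z) = b1 (0,y,z)"
    and "\<And>x y z. (x,y,z) \<in> Mk k \<Longrightarrow> V (x,y,z) =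
      (x * b1 (x,y,z) - y * b2 (x,y,z) - K / 2 * z^k * b3 (x,y,z),
       x * b2 (x,y,z) + y * b1 (x,y,z) - z^k * q (x,y,z) / 2,
       x * b3 (x,y,z) + (y * q (x,y,z) + 2 * z * b1 (x,y,z)) / K)"
proof -
  obtain a1 a2 a3 b1 b2 b3
    where reduced: "\<And>f. f \<in> {a1, a2, a3, b1, b2, b3} \<Longrightarrow> poly_fun f \<and> (\<forall>x y z. f (x,y,z) = f (0,y,z))"
    and V: "\<And>x y z. (x,y,z) \<in> Mk k \<Longrightarrow>
      V (x,y,z) = (a1 (x,y,z) + x * b1 (x,y,z), a2 (x,y,z) + x * b2 (x,y,z), a3 (x,y,z) + x * b3 (x,y,z))"
    using poly_vf_reduce_mod_Mk[where k=k, OF assms(2)] by blast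
  note tangency = Mk_tangency_equations[OF reduced V assms(3), folded K_def]
  have "poly_fun (\<lambda>p. 2 * (a2 p - fst (snd p) * b1 p))" "poly_fun (\<lambda>p. K * a3 p - 2 * snd (snd p) * b1 p)"
    using reduced by (intro poly_fun_intros; auto)+
  from poly_fun_syzygy_y_zk[OF this, of k]
  obtain q where "poly_fun q"
    and a3_q: "\<And>x y z. K * a3 (x,y,z) - 2 * z * b1 (x,y,z) = y * q (x,y,z)"
    and a2_q: "\<And>x y z. 2 * (a2 (x,y,z) - y * b1 (x,y,z)) = - (z^k * q (x,y,z))"
    using tangency(2) by auto
  have "V (x,y,z) =
      (x * b1 (x,y,z) - y * b2 (x,y,z) - K / 2 * z^k * b3 (x,y,z),
       x * b2 (x,y,z) + y * b1 (x,y,z) - z^k * q (x,y,z) / 2,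
       x * b3 (x,y,z) + (y * q (x,y,z) + 2 * z * b1 (x,y,z)) / K)" if "(x,y,z) \<in> Mk k" for x y z
  proof -
    have "K \<noteq> 0"
      unfolding K_def by simp
    have a1: "a1 (x,y,z) = - y * b2 (x,y,z) - K / 2 * z^k * b3 (x,y,z)"
      using tangency(1)[of x y z] by (simp add: field_simps) (simp add: algebra_simps eq_neg_iff_add_eq_0)
    have a2: "a2 (x,y,z) = y * b1 (x,y,z) - z^k * q (x,y,z) / 2"
      using a2_q[of x y z] by (simp add: field_simps)
    have a3: "a3 (x,y,z) = (y * q (x,y,z) + 2 * z * b1 (x,y,z)) / K"
      using a3_q[of x y z] \<open>K \<noteq> 0\<close> by (simp add: field_simps)
    show ?thesis
      unfolding V[OF that] a1 a2 a3 by (simp add: algebra_simps)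
  qed
  moreover have "poly_fun b1" "poly_fun b2" "poly_fun b3" "\<And>x y z. b1 (x,y,z) = b1 (0,y,z)"
    using reduced by auto
  ultimately show ?thesis
    using \<open>poly_fun q\<close> that by blast
qed

lemma reduced_field_eq_combination:
  fixes k :: nat
  defines "K \<equiv> of_nat (k+1) :: complex"
  shows "(x * b1 - y * b2 - K / 2 * z^k * b3, x * b2 + y * b1 - z^k * q / 2, x * b3 + (y * q + 2 * z * b1) / K)
    = vscale (- q / (2 * K)) (Vx k (x,y,z)) + vscale (b3 / 2) (Vy k (x,y,z))
      + vscale (- b2 / 2) (Vz (x,y,z)) + vscale (b1 / K) (Lam k (x,y,z))"
proof -
  have "K \<noteq> 0"
    unfolding K_def by simp
  then show ?thesis
    unfolding vscale_def Vx_def Vy_def Vz_def Lam_def K_def[symmetric]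
    by (simp add: prod_eq_iff field_simps)
qed

text \<open>These two identities are why only the coefficients of \<open>z\<^sup>i\<close>, \<open>i < k\<close>, in the multiple
  of \<open>\<Lambda>\<close> matter.\<close>
lemma y_Lam_on_Mk:
  fixes k :: nat
  defines "K \<equiv> of_nat (k+1) :: complex"
  assumes "(x,y,z) \<in> Mk k"
  shows "vscale y (Lam k (x,y,z)) = vscale (- z) (Vx k (x,y,z)) + vscale (K * x / 2) (Vz (x,y,z))"
proof -
  have "y * (K * y) - (- z * (K * z^k) + K * x / 2 * (-2 * x)) = K * (x^2 + y^2 + z^(k+1))"
    by (simp add: algebra_simps power2_eq_square)
  also have "\<dots> = 0"
    using assms(2) by (simp add: Mk_def)
  finally have "y * (K * y) = - z * (K * z^k) + K * x / 2 * (-2 * x)"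
    by simp
  then show ?thesis
    unfolding vscale_def Vx_def Vz_def Lam_def K_def[symmetric] by simp
qed

lemma zk_Lam_on_Mk:
  fixes k :: nat
  defines "K \<equiv> of_nat (k+1) :: complex"
  assumes "(x,y,z) \<in> Mk k"
  shows "vscale (z^k) (Lam k (x,y,z)) = vscale y (Vx k (x,y,z)) + vscale (- x) (Vy k (x,y,z))"
proof -
  have "z^k * (2 * z) - (y * (-2 * y) + - x * (2 * x)) = 2 * (x^2 + y^2 + z^(k+1))"
    by (simp add: algebra_simps power2_eq_square)
  also have "\<dots> = 0"
    using assms(2) by (simp add: Mk_def)
  finally have "z^k * (2 * z) = y * (-2 * y) + - x * (2 * x)"
    by simp
  then show ?thesis
    unfolding vscale_def Vx_def Vy_def Lam_def K_def[symmetric] by (simp add: algebra_simps)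
qed

lemma tangent_field_decomposition:
  fixes k :: nat
  assumes "poly_vf V" "tangent_Mk k V"
  shows "\<exists>a b c (l::nat \<Rightarrow> complex). poly3 a \<and> poly3 b \<and> poly3 c \<and>
    (\<forall>p\<in>Mk k. V p = vscale (a p) (Vx k p) + vscale (b p) (Vy k p) + vscale (c p) (Vz p)
      + vscale (\<Sum>i<k. l i * (snd (snd p))^i) (Lam k p))"
proof -
  define K :: complex where "K = of_nat (k+1)"
  have "K \<noteq> 0"
    unfolding K_def by simp
  obtain b1 b2 b3 q where poly: "poly_fun b1" "poly_fun b2" "poly_fun b3" "poly_fun q"
    and b1_x_free: "\<And>x y z. b1 (x,y,z) = b1 (0,y,z)"
    and V: "\<And>x y z. (x,y,z) \<in> Mk k \<Longrightarrow> V (x,y,z) =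
      (x * b1 (x,y,z) - y * b2 (x,y,z) - K / 2 * z^k * b3 (x,y,z),
       x * b2 (x,y,z) + y * b1 (x,y,z) - z^k * q (x,y,z) / 2,
       x * b3 (x,y,z) + (y * q (x,y,z) + 2 * z * b1 (x,y,z)) / K)"
    by (rule tangent_field_reduced_form[OF assms, folded K_def]) (rule that)
  obtain r where "poly_fun r" and b1_r: "\<And>x y z. b1 (x,y,z) = b1 (x,0,z) + y * r (x,y,z)"
    by (rule poly_fun_divide_y[OF poly(1)]) (rule that)
  obtain l s where "poly_fun s" and s_z: "\<And>x y z. s (x,y,z) = s (0,0,z)"
    and b1_l: "\<And>z. b1 (0,0,z) = (\<Sum>i<k. l i * z^i) + z^k * s (0,0,z)"
    by (rule poly_fun_split_low_z[where k=k, OF poly(1)]) (rule that)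
  define L where "L z = (\<Sum>i<k. l i * z^i)" for z
  have b1_split: "b1 (x,y,z) = L z + y * r (x,y,z) + z^k * s (x,y,z)" for x y z
    using b1_r[of x y z] b1_x_free[of x 0 z] b1_l[of z] s_z[of x y z] by (simp add: L_def)
  define a where "a p = - q p / (2 * K) + (fst (snd p) * s p - snd (snd p) * r p) / K" for p
  define b where "b p = b3 p / 2 - fst p * s p / K" for p
  define c where "c p = fst p * r p / 2 - b2 p / 2" for p
  have polys: "poly3 a" "poly3 b" "poly3 c"
    unfolding poly3_iff_poly_fun a_def[abs_def] b_def[abs_def] c_def[abs_def]
    by (intro poly_fun_intros poly \<open>poly_fun r\<close> \<open>poly_fun s\<close>)+
  have V_eq: "V p = vscale (a p) (Vx k p) + vscale (b p) (Vy k p) + vscale (c p) (Vz p)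
      + vscale (\<Sum>i<k. l i / K * (snd (snd p))^i) (Lam k p)" if "p \<in> Mk k" for p
  proof -
    obtain x y z where p: "p = (x,y,z)"
      by (cases p)
    have M: "(x,y,z) \<in> Mk k"
      using that p by simp
    have V_comb: "V p = vscale (- q p / (2 * K)) (Vx k p) + vscale (b3 p / 2) (Vy k p)
        + vscale (- b2 p / 2) (Vz p) + vscale (b1 p / K) (Lam k p)"
      unfolding p V[OF M] K_def by (rule reduced_field_eq_combination)
    have b1_Lam: "vscale (b1 p / K) (Lam k p) = vscale (L z / K) (Lam k p)
        + vscale (r p / K) (vscale y (Lam k p)) + vscale (s p / K) (vscale (z^k) (Lam k p))"
      unfolding p b1_split by (simp add: vscale_def case_prod_unfold add_divide_distrib algebra_simps)
    have L: "(\<Sum>i<k. l i / K * snd (snd p) ^ i) = L z / K"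
      unfolding p L_def sum_divide_distrib by simp
    show ?thesis
      using \<open>K \<noteq> 0\<close>
      unfolding V_comb b1_Lam L unfolding p y_Lam_on_Mk[OF M, folded K_def] zk_Lam_on_Mk[OF M]
      unfolding a_def b_def c_def vscale_def Vx_def Vy_def Vz_def Lam_def K_def[symmetric]
      by (simp add: field_simps)
  qed
  show ?thesis
    using polys V_eq by (intro exI[of _ a] exI[of _ b] exI[of _ c] exI[of _ "\<lambda>i. l i / K"]) simp
qed

lemma low_degree_coeffs_eq_0_if_divisible:
  fixes l :: "nat \<Rightarrow> complex" and g :: "complex \<Rightarrow> complex"
  assumes "isCont g 0" and divisible: "\<And>z. z \<noteq> 0 \<Longrightarrow> (\<Sum>i<k. l i * z^i) = z^k * g z"
  shows "i < k \<Longrightarrow> l i = 0"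
proof (induction i rule: less_induct)
  case (less i)
  define G where "G z = (\<Sum>m\<in>{i..<k}. l m * z^(m - i))" for z :: complex
  have low_part: "(\<Sum>m<k. l m * z^m) = z^i * G z" for z
  proof -
    have "(\<Sum>m<k. l m * z^m) = (\<Sum>m\<in>{i..<k}. l m * z^m)"
      using less by (intro sum.mono_neutral_right) auto
    also have "\<dots> = z^i * G z"
      unfolding G_def sum_distrib_left by (intro sum.cong refl) (auto simp flip: power_add)
    finally show ?thesis .
  qed
  have "isCont (\<lambda>z. G z - z^(k - i) * g z) 0"
    unfolding G_def using assms(1) by (intro continuous_intros)
  moreover have "G z - z^(k - i) * g z = 0" if "z \<noteq> 0" for z
  proof -
    have "z^k = z^i * z^(k - i)"
      using less.prems by (simp flip: power_add)
    then have "z^i * G z = z^i * (z^(k - i) * g z)"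
      using divisible[OF that] unfolding low_part by (simp only: mult.assoc)
    then show ?thesis
      using that by simp
  qed
  ultimately have "G 0 - 0^(k - i) * g 0 = 0"
    by (rule isCont_eq_if_eq_off_point[where h = "\<lambda>z. G z - z^(k - i) * g z"])
  moreover have "G 0 = l i"
  proof -
    have "G 0 = (\<Sum>m\<in>{i..<k}. if m = i then l m else 0)"
      unfolding G_def by (intro sum.cong) auto
    then show ?thesis
      using less.prems by simp
  qed
  ultimately show ?case
    using less.prems by simp
qed

lemma euler_coefficients_unique:
  fixes l :: "nat \<Rightarrow> complex"
  assumes "poly3 a"
    and comb: "\<forall>p\<in>Mk k. vscale (a p) (Vx k p) + vscale (b p) (Vy k p) + vscale (c p) (Vz p)
      + vscale (\<Sum>i<k. l i * (snd (snd p))^i) (Lam k p) = 0"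
  shows "\<forall>i<k. l i = 0"
proof -
  define L where "L z = (\<Sum>i<k. l i * z^i)" for z :: complex
  have on_y_axis: "a (0,y,z) * z^k + L z * y = 0" if "(0,y,z) \<in> Mk k" for y z
  proof -
    have "fst (snd (vscale (a (0,y,z)) (Vx k (0,y,z)) + vscale (b (0,y,z)) (Vy k (0,y,z))
        + vscale (c (0,y,z)) (Vz (0,y,z)) + vscale (L z) (Lam k (0,y,z)))) = 0"
      using comb that unfolding L_def by fastforce
    then have "of_nat (k+1) * (a (0,y,z) * z^k + L z * y) = 0"
      by (simp add: vscale_def Vx_def Vy_def Vz_def Lam_def algebra_simps)
    then show ?thesis
      by simp
  qed
  have "poly_fun (\<lambda>p. a (fst (snd p), fst p, snd (snd p)))"
    using assms(1) unfolding poly3_iff_poly_fun by (intro poly_fun_subst poly_fun_intros)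
  then obtain f0 f1 where "poly_fun f1" and f1_x_free: "\<And>x y z. f1 (x,y,z) = f1 (0,y,z)"
    and f0_x_free: "\<And>x y z. f0 (x,y,z) = f0 (0,y,z)"
    and a_split: "\<And>x y z. (x,y,z) \<in> Mk k \<Longrightarrow> a (y,x,z) = f0 (x,y,z) + x * f1 (x,y,z)"
    by (rule poly_fun_reduce_mod_Mk[where k=k]) (auto intro: that)
  have "L z = z^k * (- f1 (0,0,z))" if "z \<noteq> 0" for z
  proof -
    define w where "w = csqrt (-(z^(k+1)))"
    have "w \<noteq> 0"
      unfolding w_def using that by simp
    have M: "(0,w,z) \<in> Mk k" "(0,-w,z) \<in> Mk k" "(w,0,z) \<in> Mk k" "(-w,0,z) \<in> Mk k"
      by (simp_all add: Mk_def w_def)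
    have a_pos: "a (0,w,z) = f0 (0,0,z) + w * f1 (0,0,z)"
      and a_neg: "a (0,-w,z) = f0 (0,0,z) - w * f1 (0,0,z)"
      using a_split[OF M(3)] a_split[OF M(4)] f0_x_free[of w 0 z] f1_x_free[of w 0 z]
        f0_x_free[of "-w" 0 z] f1_x_free[of "-w" 0 z] by simp_all
    have "2 * w * (z^k * f1 (0,0,z) + L z)
        = (a (0,w,z) * z^k + L z * w) - (a (0,-w,z) * z^k + L z * (-w))"
      unfolding a_pos a_neg by (simp add: algebra_simps)
    also have "\<dots> = 0"
      using on_y_axis[OF M(1)] on_y_axis[OF M(2)] by simp
    finally show ?thesis
      using \<open>w \<noteq> 0\<close> by (simp add: add_eq_0_iff)
  qed
  moreover have "isCont (\<lambda>z. - f1 (0,0,z)) 0"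
    using \<open>poly_fun f1\<close> by (intro continuous_intros)
  ultimately show ?thesis
    using low_degree_coeffs_eq_0_if_divisible[where g = "\<lambda>z. - f1 (0,0,z)"] unfolding L_def by blast
qed

section \<open>Hamiltonian fields\<close>

lemma Mk_equation_has_vector_derivative:
  fixes u v w :: "real \<Rightarrow> complex"
  assumes "(u has_vector_derivative a) (at t)" "(v has_vector_derivative b) (at t)"
    "(w has_vector_derivative c) (at t)"
  shows "((\<lambda>s. u s^2 + v s^2 + w s^(k+1)) has_vector_derivative
    a * (2 * u t) + b * (2 * v t) + c * (of_nat (k+1) * w t^k)) (at t)"
proof -
  have "w t * w t ^ (k - 1) = w t ^ k" if "k > 0"
    using that by (simp flip: power_Suc)
  then show ?thesis
    using assms unfolding has_vector_derivative_def
    by (cases "k = 0") (auto intro!: derivative_eq_intros simp: fun_eq_iff algebra_simps scaleR_conv_of_real)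
qed

lemma Mk_curve_velocity_tangent:
  fixes \<gamma> :: "real \<Rightarrow> pt3"
  assumes "\<And>s. \<gamma> s \<in> Mk k" "(\<gamma> has_vector_derivative v) (at t)"
  shows "fst v * (2 * fst (\<gamma> t)) + fst (snd v) * (2 * fst (snd (\<gamma> t)))
    + snd (snd v) * (of_nat (k+1) * snd (snd (\<gamma> t))^k) = 0"
proof -
  have "((\<lambda>s. fst (\<gamma> s)) has_vector_derivative fst v) (at t)"
    and "((\<lambda>s. fst (snd (\<gamma> s))) has_vector_derivative fst (snd v)) (at t)"
    and "((\<lambda>s. snd (snd (\<gamma> s))) has_vector_derivative snd (snd v)) (at t)"
    by (intro bounded_linear.has_vector_derivative[OF _ assms(2)] bounded_linear_fst
        bounded_linear_compose[OF bounded_linear_fst bounded_linear_snd]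
        bounded_linear_compose[OF bounded_linear_snd bounded_linear_snd])+
  from Mk_equation_has_vector_derivative[where k=k, OF this]
  have "((\<lambda>s. 0) has_vector_derivative
      fst v * (2 * fst (\<gamma> t)) + fst (snd v) * (2 * fst (snd (\<gamma> t)))
      + snd (snd v) * (of_nat (k+1) * snd (snd (\<gamma> t))^k)) (at t)"
    using assms(1) by (simp add: Mk_def case_prod_unfold)
  then show ?thesis
    using vector_derivative_unique_at[OF _ has_vector_derivative_const] by blast
qed

lemma Mk_x_nonzero_if_zk_eq_0:
  assumes "(x,y,z) \<in> Mk k - {0}" "z^k = 0"
  shows "x \<noteq> 0"
proof
  assume "x = 0"
  moreover from assms(2) have "z = 0"
    by simp
  moreover from calculation have "y = 0"
    using assms(1) by (simp add: Mk_def)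
  ultimately show False
    using assms(1) by (simp add: zero_prod_def)
qed

lemma hamiltonian_if_omega_eq_linear:
  assumes "bounded_linear P"
    and omega_eq: "\<And>x y z b1 b2 b3. (x,y,z) \<in> Mk k - {0} \<Longrightarrow>
      b1 * (2*x) + b2 * (2*y) + b3 * (of_nat (k+1) * z^k) = 0 \<Longrightarrow>
      omega k (x,y,z) (V (x,y,z)) (b1,b2,b3) = - P (b1,b2,b3)"
  shows "hamiltonian k V"
  unfolding hamiltonian_def exact_on_def
proof (intro exI[of _ "\<lambda>p. - P p"] allI impI)
  fix \<gamma> :: "real \<Rightarrow> pt3" and v t
  assume \<gamma>: "\<forall>s. \<gamma> s \<in> Mk k - {0}" and v: "(\<gamma> has_vector_derivative v) (at t)"
  obtain x y z where p: "\<gamma> t = (x,y,z)"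
    by (cases "\<gamma> t")
  obtain b1 b2 b3 where b: "v = (b1,b2,b3)"
    by (cases v)
  have "(x,y,z) \<in> Mk k - {0}"
    using \<gamma> p by metis
  moreover have "b1 * (2*x) + b2 * (2*y) + b3 * (of_nat (k+1) * z^k) = 0"
    using Mk_curve_velocity_tangent[of \<gamma> k v t] \<gamma> v unfolding p b by simp
  ultimately have "omega k (\<gamma> t) (V (\<gamma> t)) v = - P v"
    unfolding p b by (rule omega_eq)
  then show "((\<lambda>s. - P (\<gamma> s)) has_vector_derivative omega k (\<gamma> t) (V (\<gamma> t)) v) (at t)"
    using bounded_linear.has_vector_derivative[OF assms(1) v] has_vector_derivative_minus by fastforce
qed

lemma hamiltonian_Vx: "hamiltonian k (Vx k)"
proof (rule hamiltonian_if_omega_eq_linear[OF bounded_linear_fst])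
  fix x y z b1 b2 b3
  assume M: "(x,y,z) \<in> Mk k - {0}"
    and tangent: "b1 * (2*x) + b2 * (2*y) + b3 * (of_nat (k+1) * z^k) = 0"
  show "omega k (x,y,z) (Vx k (x,y,z)) (b1,b2,b3) = - fst (b1,b2,b3)"
  proof (cases "of_nat (k+1) * z^k = (0::complex)")
    case True
    then have "x \<noteq> 0"
      using Mk_x_nonzero_if_zk_eq_0[OF M] by simp
    moreover have "b2 * y = - b1 * x"
      using tangent True by (simp add: algebra_simps add_eq_0_iff)
    ultimately show ?thesis
      using True by (simp add: omega_def Vx_def field_simps)
  qed (simp add: omega_def Vx_def field_simps)
qed

lemma hamiltonian_Vy: "hamiltonian k (Vy k)"
proof (rule hamiltonian_if_omega_eq_linear[OF bounded_linear_compose[OF bounded_linear_fst bounded_linear_snd]])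
  fix x y z b1 b2 b3
  assume M: "(x,y,z) \<in> Mk k - {0}"
  show "omega k (x,y,z) (Vy k (x,y,z)) (b1,b2,b3) = - fst (snd (b1,b2,b3))"
  proof (cases "of_nat (k+1) * z^k = (0::complex)")
    case True
    then have "x \<noteq> 0"
      using Mk_x_nonzero_if_zk_eq_0[OF M] by simp
    then show ?thesis
      using True by (simp add: omega_def Vy_def field_simps)
  qed (simp add: omega_def Vy_def field_simps)
qed

lemma hamiltonian_Vz: "hamiltonian k Vz"
proof (rule hamiltonian_if_omega_eq_linear[OF bounded_linear_compose[OF bounded_linear_snd bounded_linear_snd]])
  fix x y z b1 b2 b3
  assume M: "(x,y,z) \<in> Mk k - {0}"
    and tangent: "b1 * (2*x) + b2 * (2*y) + b3 * (of_nat (k+1) * z^k) = 0"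
  show "omega k (x,y,z) (Vz (x,y,z)) (b1,b2,b3) = - snd (snd (b1,b2,b3))"
  proof (cases "of_nat (k+1) * z^k = (0::complex)")
    case True
    then have "x \<noteq> 0"
      using Mk_x_nonzero_if_zk_eq_0[OF M] by simp
    then show ?thesis
      using True by (simp add: omega_def Vz_def field_simps)
  next
    case False
    have "2 * y * b2 + 2 * x * b1 = - (b3 * (of_nat (k+1) * z^k))"
      using tangent by (simp add: algebra_simps add_eq_0_iff)
    then show ?thesis
      using False by (simp add: omega_def Vz_def field_simps)
  qed
qed

section \<open>The Euler field is not symplectic\<close>

lemma exact_on_loop_period_zero:
  fixes \<gamma> \<gamma>' :: "real \<Rightarrow> pt3" and G g :: "real \<Rightarrow> real"
  assumes "exact_on S \<alpha>" "\<And>s. \<gamma> s \<in> S" "\<And>s. (\<gamma> has_vector_derivative \<gamma>' s) (at s)"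
    and "\<And>s. \<alpha> (\<gamma> s) (\<gamma>' s) = of_real (g s)" "\<And>s. (G has_real_derivative g s) (at s)"
    and "\<gamma> a = \<gamma> b"
  shows "G a = G b"
proof -
  obtain H where H: "\<And>s. ((\<lambda>s. H (\<gamma> s)) has_vector_derivative \<alpha> (\<gamma> s) (\<gamma>' s)) (at s)"
    using assms(1-3) unfolding exact_on_def by metis
  have "((\<lambda>s. H (\<gamma> s) - of_real (G s)) has_vector_derivative 0) (at s)" for s
    using has_vector_derivative_diff[OF H has_vector_derivative_of_real[OF assms(5)]] assms(4) by simp
  then obtain c where c: "\<And>s. H (\<gamma> s) - of_real (G s) = c"
    using has_vector_derivative_zero_constant[of UNIV "\<lambda>s. H (\<gamma> s) - of_real (G s)"] by auto
  have "complex_of_real (G a) = H (\<gamma> a) - c" "complex_of_real (G b) = H (\<gamma> b) - c"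
    using c[of a] c[of b] by (simp_all add: algebra_simps)
  then show ?thesis
    using assms(6) by (metis of_real_eq_iff)
qed

definition Mk_param :: "nat \<Rightarrow> real \<Rightarrow> real \<Rightarrow> pt3" where
  "Mk_param k u \<phi> = (\<i> * of_real (u^(k+1) * cos \<phi>), \<i> * of_real (u^(k+1) * sin \<phi>), of_real (u^2))"

lemma Mk_param_in_Mk: "Mk_param k u \<phi> \<in> Mk k"
proof -
  have "(U * cos \<phi>)^2 + (U * sin \<phi>)^2 = U^2" for U :: real
    by (simp add: power_mult_distrib flip: distrib_left)
  moreover have "(u^2)^(k+1) = (u^(k+1))^2"
    by (simp only: power_mult[symmetric] mult.commute)
  ultimately have "(u^(k+1) * cos \<phi>)^2 + (u^(k+1) * sin \<phi>)^2 = (u^2)^(k+1)"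
    by metis
  have "(\<i> * complex_of_real (u^(k+1) * cos \<phi>))^2 + (\<i> * complex_of_real (u^(k+1) * sin \<phi>))^2
      + (complex_of_real (u^2))^(k+1)
      = complex_of_real ((u^2)^(k+1) - ((u^(k+1) * cos \<phi>)^2 + (u^(k+1) * sin \<phi>)^2))"
    by (simp add: power_mult_distrib algebra_simps)
  also have "\<dots> = 0"
    using \<open>(u^(k+1) * cos \<phi>)^2 + (u^(k+1) * sin \<phi>)^2 = (u^2)^(k+1)\<close> by simp
  finally show ?thesis
    unfolding Mk_param_def Mk_def by simp
qed

lemma Mk_param_nonzero: "u \<noteq> 0 \<Longrightarrow> Mk_param k u \<phi> \<noteq> 0"
  unfolding Mk_param_def by (simp add: zero_prod_def)

lemma isCont_Mk_param: "isCont (\<lambda>q. Mk_param k (fst q) (snd q)) q"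
  unfolding Mk_param_def by (intro continuous_intros)

lemma Mk_param_has_vector_derivative:
  assumes "(u has_real_derivative u') (at t)" "(\<phi> has_real_derivative \<phi>') (at t)"
  shows "((\<lambda>s. Mk_param k (u s) (\<phi> s)) has_vector_derivative
    (\<i> * of_real (of_nat (k+1) * u t^k * u' * cos (\<phi> t) - u t^(k+1) * sin (\<phi> t) * \<phi>'),
     \<i> * of_real (of_nat (k+1) * u t^k * u' * sin (\<phi> t) + u t^(k+1) * cos (\<phi> t) * \<phi>'),
     of_real (2 * u t * u'))) (at t)"
  unfolding Mk_param_def by (rule derivative_eq_intros assms refl | simp)+

lemma omega_Lam_Mk_param:
  assumes "u \<noteq> 0"
  shows "omega k (Mk_param k u \<phi>) (Lam k (Mk_param k u \<phi>))
    (\<i> * of_real (of_nat (k+1) * u^k * u' * cos \<phi> - u^(k+1) * sin \<phi> * \<phi>'),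
     \<i> * of_real (of_nat (k+1) * u^k * u' * sin \<phi> + u^(k+1) * cos \<phi> * \<phi>'), w)
    = of_real (- (u^2 * \<phi>'))"
proof -
  define U where "U = u^(k+1)"
  define X where "X = of_nat (k+1) * u^k * u' * cos \<phi> - U * sin \<phi> * \<phi>'"
  define Y where "Y = of_nat (k+1) * u^k * u' * sin \<phi> + U * cos \<phi> * \<phi>'"
  have "of_nat (k+1) * (complex_of_real (u^2))^k \<noteq> 0"
    using assms by simp
  then have "omega k (Mk_param k u \<phi>) (Lam k (Mk_param k u \<phi>)) (\<i> * of_real X, \<i> * of_real Y, w)
      = (of_nat (k+1) * ((\<i> * of_real (U * cos \<phi>)) * (\<i> * of_real Y))
        - of_nat (k+1) * ((\<i> * of_real (U * sin \<phi>)) * (\<i> * of_real X)))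
        / (of_nat (k+1) * (of_real (u^2))^k)"
    unfolding omega_def Mk_param_def Lam_def U_def by (simp add: mult.assoc)
  also have "\<dots> = of_nat (k+1) * of_real (- (U * cos \<phi> * Y - U * sin \<phi> * X))
      / (of_nat (k+1) * of_real ((u^2)^k))"
    by (simp add: algebra_simps)
  also have "\<dots> = of_real (- (U * cos \<phi> * Y - U * sin \<phi> * X) / (u^2)^k)"
    by (subst mult_divide_mult_cancel_left) simp_all
  also have "U * cos \<phi> * Y - U * sin \<phi> * X = U^2 * \<phi>' * ((sin \<phi>)^2 + (cos \<phi>)^2)"
    unfolding X_def Y_def power2_eq_square by algebra
  also have "- (U^2 * \<phi>' * ((sin \<phi>)^2 + (cos \<phi>)^2)) / (u^2)^k = - (u^2 * \<phi>')"
    using assms unfolding U_def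
    by (simp add: field_simps power_mult[symmetric] power_add[symmetric] mult.commute power2_eq_square)
  finally show ?thesis
    unfolding X_def Y_def U_def .
qed

text \<open>A primitive of \<open>-u\<^sup>2 \<phi>'\<close> along the circle \<open>u = 1 + r cos s\<close>, \<open>\<phi> = r sin s\<close>.\<close>
definition Lam_loop_primitive :: "real \<Rightarrow> real \<Rightarrow> real" where
  "Lam_loop_primitive r s = - r * sin s - r^2 * (s + sin s * cos s) - r^3 * (sin s - (sin s)^3 / 3)"

lemma Lam_loop_primitive_has_derivative:
  "(Lam_loop_primitive r has_real_derivative - ((1 + r * cos s)^2 * (r * cos s))) (at s)"
proof -
  have "(Lam_loop_primitive r has_real_derivative - r * cos s - r^2 * (1 + cos s * cos s - sin s * sin s)
      - r^3 * (cos s - (sin s)^2 * cos s)) (at s)"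
    unfolding Lam_loop_primitive_def[abs_def]
    by (auto intro!: derivative_eq_intros simp: power2_eq_square algebra_simps)
  moreover have "- r * cos s - r^2 * (1 + cos s * cos s - sin s * sin s) - r^3 * (cos s - (sin s)^2 * cos s)
      = - ((1 + r * cos s)^2 * (r * cos s))"
  proof -
    have sin_sq: "sin s * sin s = 1 - cos s * cos s"
      using sin_squared_eq[of s] by (simp add: power2_eq_square)
    show ?thesis
      unfolding sin_sq power2_eq_square by (simp add: algebra_simps power3_eq_cube)
  qed
  ultimately show ?thesis
    by simp
qed

lemma Lam_loop_primitive_period: "Lam_loop_primitive r (2 * pi) - Lam_loop_primitive r 0 = - 2 * pi * r^2"
  unfolding Lam_loop_primitive_def by simp

lemma Mk_param_small_circle:
  assumes "e > 0"
  obtains r where "0 < r" "r \<le> 1/2"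
    and "\<And>s. dist (Mk_param k (1 + r * cos s) (r * sin s)) (Mk_param k 1 0) < e"
proof -
  obtain d where "d > 0"
    and d: "\<And>q. dist q (1::real, 0::real) < d \<Longrightarrow> dist (Mk_param k (fst q) (snd q)) (Mk_param k 1 0) < e"
    using isCont_Mk_param[where k=k and q="(1,0)"] assms unfolding continuous_at_eps_delta by fastforce
  define r where "r = min (d/2) (1/2)"
  have r: "0 < r" "r < d" "r \<le> 1/2"
    using \<open>d > 0\<close> unfolding r_def by auto
  have "dist (1 + r * cos s, r * sin s) (1::real, 0::real) = r" for s
  proof -
    have "dist (1 + r * cos s, r * sin s) (1::real, 0::real) = sqrt ((r * cos s)^2 + (r * sin s)^2)"
      unfolding dist_Pair_Pair by (simp add: dist_real_def)
    also have "\<dots> = r"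
      using \<open>0 < r\<close> by (simp add: power_mult_distrib flip: distrib_left)
    finally show ?thesis .
  qed
  then have "dist (Mk_param k (1 + r * cos s) (r * sin s)) (Mk_param k 1 0) < e" for s
    using d[of "(1 + r * cos s, r * sin s)"] r(2) by simp
  with r(1,3) show ?thesis
    by (rule that)
qed

lemma omega_Lam_along_circle:
  fixes k :: nat and r :: real
  assumes "0 \<le> r" "r \<le> 1/2"
  defines "\<gamma> \<equiv> \<lambda>s. Mk_param k (1 + r * cos s) (r * sin s)"
  obtains \<gamma>' where "\<And>s. (\<gamma> has_vector_derivative \<gamma>' s) (at s)"
    and "\<And>s. omega k (\<gamma> s) (Lam k (\<gamma> s)) (\<gamma>' s) = of_real (- ((1 + r * cos s)^2 * (r * cos s)))"
proof -
  define u where "u s = 1 + r * cos s" for s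
  define \<phi> where "\<phi> s = r * sin s" for s
  define \<gamma>' :: "real \<Rightarrow> pt3" where "\<gamma>' s =
    (\<i> * of_real (of_nat (k+1) * u s^k * (- r * sin s) * cos (\<phi> s) - u s^(k+1) * sin (\<phi> s) * (r * cos s)),
     \<i> * of_real (of_nat (k+1) * u s^k * (- r * sin s) * sin (\<phi> s) + u s^(k+1) * cos (\<phi> s) * (r * cos s)),
     of_real (2 * u s * (- r * sin s)))" for s
  have "(u has_real_derivative - r * sin s) (at s)" "(\<phi> has_real_derivative r * cos s) (at s)" for s
    unfolding u_def[abs_def] \<phi>_def[abs_def] by (auto intro!: derivative_eq_intros)
  then have "(\<gamma> has_vector_derivative \<gamma>' s) (at s)" for s
    using Mk_param_has_vector_derivative[of u "- r * sin s" s \<phi> "r * cos s" k]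
    unfolding \<gamma>_def \<gamma>'_def u_def \<phi>_def by simp
  moreover have "u s \<noteq> 0" for s
  proof -
    have "r * (-1) \<le> r * cos s"
      using assms(1) by (intro mult_left_mono) auto
    then show ?thesis
      using assms(2) unfolding u_def by linarith
  qed
  then have "omega k (\<gamma> s) (Lam k (\<gamma> s)) (\<gamma>' s) = of_real (- ((1 + r * cos s)^2 * (r * cos s)))" for s
    using omega_Lam_Mk_param[of "u s" k "\<phi> s" "- r * sin s" "r * cos s"]
    unfolding \<gamma>_def \<gamma>'_def u_def \<phi>_def by simp
  ultimately show ?thesis
    by (rule that)
qed

lemma not_symplectic_Lam: "\<not> symplectic_vf k (Lam k)"
proof
  assume "symplectic_vf k (Lam k)"
  define p0 where "p0 = Mk_param k 1 0"
  have "p0 \<in> Mk k - {0}"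
    unfolding p0_def using Mk_param_in_Mk Mk_param_nonzero by simp
  then obtain e where "e > 0" and exact: "exact_on ((Mk k - {0}) \<inter> ball p0 e) (\<lambda>p w. omega k p (Lam k p) w)"
    using \<open>symplectic_vf k (Lam k)\<close> unfolding symplectic_vf_def closed_on_def by blast
  obtain r where r: "0 < r" "r \<le> 1/2"
    and near: "\<And>s. dist (Mk_param k (1 + r * cos s) (r * sin s)) p0 < e"
    using Mk_param_small_circle[OF \<open>e > 0\<close>] unfolding p0_def by blast
  define \<gamma> where "\<gamma> s = Mk_param k (1 + r * cos s) (r * sin s)" for s
  obtain \<gamma>' where "\<And>s. (\<gamma> has_vector_derivative \<gamma>' s) (at s)"
    and "\<And>s. omega k (\<gamma> s) (Lam k (\<gamma> s)) (\<gamma>' s) = of_real (- ((1 + r * cos s)^2 * (r * cos s)))"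
    using omega_Lam_along_circle[where k=k, OF less_imp_le[OF r(1)] r(2)] unfolding \<gamma>_def[abs_def] by blast
  moreover have "\<gamma> s \<in> (Mk k - {0}) \<inter> ball p0 e" for s
  proof -
    have "1 + r * cos s \<noteq> 0"
      using r mult_left_mono[of "-1" "cos s" r] by auto
    then show ?thesis
      using near[of s] Mk_param_in_Mk Mk_param_nonzero unfolding \<gamma>_def by (simp add: dist_commute)
  qed
  moreover have "\<gamma> (2 * pi) = \<gamma> 0"
    unfolding \<gamma>_def by simp
  ultimately have "Lam_loop_primitive r (2 * pi) = Lam_loop_primitive r 0"
    using exact_on_loop_period_zero[OF exact _ _ _ Lam_loop_primitive_has_derivative] by blast
  then show False
    using Lam_loop_primitive_period[of r] r(1) by simp
qed

theorem lemma4p5: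
  fixes k :: nat
  shows
    "(\<forall>V\<in>{Vx k, Vy k, Vz, Lam k}. poly_vf V \<and> tangent_Mk k V)
   \<and> (\<forall>V. poly_vf V \<and> tangent_Mk k V \<longrightarrow>
        (\<exists>a b c (l::nat \<Rightarrow> complex). poly3 a \<and> poly3 b \<and> poly3 c \<and>
          (\<forall>p\<in>Mk k. V p = vscale (a p) (Vx k p) + vscale (b p) (Vy k p) + vscale (c p) (Vz p)
              + vscale (\<Sum>i<k. l i * (snd (snd p))^i) (Lam k p))))
   \<and> (\<forall>a b c (l::nat \<Rightarrow> complex). poly3 a \<and> poly3 b \<and> poly3 c \<and>
          (\<forall>p\<in>Mk k. vscale (a p) (Vx k p) + vscale (b p) (Vy k p) + vscale (c p) (Vz p)
              + vscale (\<Sum>i<k. l i * (snd (snd p))^i) (Lam k p) = 0)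
        \<longrightarrow> (\<forall>i<k. l i = 0))
   \<and> hamiltonian k (Vx k) \<and> hamiltonian k (Vy k) \<and> hamiltonian k Vz
   \<and> \<not> symplectic_vf k (Lam k)"
proof -
  have "\<forall>V\<in>{Vx k, Vy k, Vz, Lam k}. poly_vf V \<and> tangent_Mk k V"
    using poly_vf_basic_fields tangent_Mk_basic_fields by auto
  then show ?thesis
    using tangent_field_decomposition euler_coefficients_unique
      hamiltonian_Vx hamiltonian_Vy hamiltonian_Vz not_symplectic_Lam by blast
qed

end
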